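(* Let $G$ be a graph, $x\in V(G)$ and $N_G(x)=Y\cup Z$ a partition into disjoint (possibly empty) sets. Then $\operatorname{Ind}(\mathcal{L}_x(G;Y,Z))$ is homotopy equivalent to the (unreduced) suspension $\Sigma\operatorname{Ind}(G)$.
   Context: $\operatorname{Ind}(G)$ is the independence complex of $G$. The Lozin transform $\mathcal{L}_x(G;Y,Z)$: delete $x$, add four new vertices $y,a,b,z$ with edges $ya,ab,bz$, and join $y$ to every vertex of $Y$ and $z$ to every vertex of $Z$. *)

theory Defs
  imports "HOL-Analysis.Analysis"
begin

definition simple_graph :: "'a set \<Rightarrow> ('a \<Rightarrow> 'a \<Rightarrow> bool) \<Rightarrow> bool" where
  "simple_graph V E \<longleftrightarrow> finite V \<and> (\<forall>u w. E u w \<longrightarrow> E w u) \<and> (\<forall>u. \<not> E u u)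
     \<and> (\<forall>u w. E u w \<longrightarrow> u \<in> V \<and> w \<in> V)"

definition nbhd :: "'a set \<Rightarrow> ('a \<Rightarrow> 'a \<Rightarrow> bool) \<Rightarrow> 'a \<Rightarrow> 'a set" where
  "nbhd V E x = {v \<in> V. E x v}"

definition Ind :: "'a set \<Rightarrow> ('a \<Rightarrow> 'a \<Rightarrow> bool) \<Rightarrow> 'a set set" where
  "Ind V E = {\<sigma>. \<sigma> \<subseteq> V \<and> (\<forall>u\<in>\<sigma>. \<forall>w\<in>\<sigma>. \<not> E u w)}"

text \<open>Geometric realisation of a (finite) abstract simplicial complex K on vertex type 'v,
  as the set of barycentric-coordinate functions supported on a face, inside 'v \<Rightarrow> real
  (product topology).\<close>
definition realization :: "'v set set \<Rightarrow> ('v \<Rightarrow> real) set" where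
  "realization K = {f. (\<exists>\<sigma>\<in>K. finite \<sigma> \<and> {v. f v \<noteq> 0} \<subseteq> \<sigma>) \<and> (\<forall>v. 0 \<le> f v)
                      \<and> sum f {v. f v \<noteq> 0} = 1}"

datatype 'a lv = Old 'a | Ny | Na | Nb | Nz

fun lozin_arc :: "'a set \<Rightarrow> ('a \<Rightarrow> 'a \<Rightarrow> bool) \<Rightarrow> 'a \<Rightarrow> 'a set \<Rightarrow> 'a set \<Rightarrow> 'a lv \<Rightarrow> 'a lv \<Rightarrow> bool" where
  "lozin_arc V E x Y Z (Old p) (Old q) = (p \<in> V - {x} \<and> q \<in> V - {x} \<and> E p q)"
| "lozin_arc V E x Y Z Ny (Old q) = (q \<in> Y)"
| "lozin_arc V E x Y Z Nz (Old q) = (q \<in> Z)"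
| "lozin_arc V E x Y Z Ny Na = True"
| "lozin_arc V E x Y Z Na Nb = True"
| "lozin_arc V E x Y Z Nb Nz = True"
| "lozin_arc V E x Y Z _ _ = False"

definition lozin_V :: "'a set \<Rightarrow> 'a \<Rightarrow> 'a lv set" where
  "lozin_V V x = Old ` (V - {x}) \<union> {Ny, Na, Nb, Nz}"

definition lozin_E :: "'a set \<Rightarrow> ('a \<Rightarrow> 'a \<Rightarrow> bool) \<Rightarrow> 'a \<Rightarrow> 'a set \<Rightarrow> 'a set \<Rightarrow> 'a lv \<Rightarrow> 'a lv \<Rightarrow> bool" where
  "lozin_E V E x Y Z u w \<longleftrightarrow> lozin_arc V E x Y Z u w \<or> lozin_arc V E x Y Z w u"

text \<open>Simplicial (unreduced) suspension: join with the two-point complex {North, South}.\<close>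
datatype 'v susp = SV 'v | North | South

definition suspension :: "'v set set \<Rightarrow> 'v susp set set" where
  "suspension K = (\<Union>\<sigma>\<in>K. {SV ` \<sigma>, insert North (SV ` \<sigma>), insert South (SV ` \<sigma>)})"

end

theory Submission
  imports Defs
begin

text \<open>
  The homotopy equivalence is given by explicit piecewise-linear maps between the geometric
  realisations. The map to the suspension keeps the old vertices and collapses the path
  y--a--b--z: y and b go to the north pole, a and z to the south pole, and the barycentre of
  the edge yz goes to x. A homotopy inverse sends x to the barycentre of yz and the poles to
  b and a. Two maps into a realisation are homotopic by the straight-line homotopy as soon as
  they carry every point into a common simplex. This holds for both composites and the
  identity, except that on the path one intermediate map, moving mass between y and z towards
  the heavier of the two, has to be interposed. The face conditions come down to the fact that
  x is adjacent exactly to \<open>Y \<union> Z\<close>, while y and z are adjacent to Y and Z.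
\<close>

definition supp :: "('v \<Rightarrow> real) \<Rightarrow> 'v set" where
  "supp f = {v. f v \<noteq> 0}"

lemma sum_supp_superset: "finite S \<Longrightarrow> supp f \<subseteq> S \<Longrightarrow> sum f (supp f) = sum f S"
  by (rule sum.mono_neutral_left) (auto simp: supp_def)

lemma sum_supp_lv:
  assumes "finite (supp p)"
  shows "sum p (supp p) =
    (\<Sum>v | v \<noteq> x \<and> p (Old v) \<noteq> 0. p (Old v)) + p (Old x) + p Ny + p Na + p Nb + p Nz"
proof -
  let ?T = "{v. v \<noteq> x \<and> p (Old v) \<noteq> 0}"
  have "finite (Old -` supp p)" using assms by (simp add: finite_vimageI inj_def)
  then have fin: "finite ?T" by (rule finite_subset[rotated]) (auto simp: supp_def)
  have "supp p \<subseteq> Old ` ?T \<union> {Old x, Ny, Na, Nb, Nz}"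
  proof
    fix v assume "v \<in> supp p"
    then show "v \<in> Old ` ?T \<union> {Old x, Ny, Na, Nb, Nz}" by (cases v) (auto simp: supp_def)
  qed
  then have "sum p (supp p) = sum p (Old ` ?T \<union> {Old x, Ny, Na, Nb, Nz})"
    using fin by (intro sum_supp_superset) auto
  also have "\<dots> = sum p (Old ` ?T) + p (Old x) + p Ny + p Na + p Nb + p Nz"
    using fin by (subst sum.union_disjoint) auto
  also have "sum p (Old ` ?T) = (\<Sum>v\<in>?T. p (Old v))"
    by (simp add: sum.reindex inj_on_def)
  finally show ?thesis .
qed

lemma sum_supp_susp:
  assumes "finite (supp q)"
  shows "sum q (supp q) =
    (\<Sum>v | v \<noteq> x \<and> q (SV v) \<noteq> 0. q (SV v)) + q (SV x) + q North + q South"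
proof -
  let ?T = "{v. v \<noteq> x \<and> q (SV v) \<noteq> 0}"
  have "finite (SV -` supp q)" using assms by (simp add: finite_vimageI inj_def)
  then have fin: "finite ?T" by (rule finite_subset[rotated]) (auto simp: supp_def)
  have "supp q \<subseteq> SV ` ?T \<union> {SV x, North, South}"
  proof
    fix v assume "v \<in> supp q"
    then show "v \<in> SV ` ?T \<union> {SV x, North, South}" by (cases v) (auto simp: supp_def)
  qed
  then have "sum q (supp q) = sum q (SV ` ?T \<union> {SV x, North, South})"
    using fin by (intro sum_supp_superset) auto
  also have "\<dots> = sum q (SV ` ?T) + q (SV x) + q North + q South"
    using fin by (subst sum.union_disjoint) auto
  also have "sum q (SV ` ?T) = (\<Sum>v\<in>?T. q (SV v))"
    by (simp add: sum.reindex inj_on_def)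
  finally show ?thesis .
qed

lemma realization_iff:
  assumes "\<And>\<sigma> \<tau>. \<sigma> \<in> K \<Longrightarrow> \<tau> \<subseteq> \<sigma> \<Longrightarrow> \<tau> \<in> K"
  shows "p \<in> realization K \<longleftrightarrow>
    (\<forall>v. 0 \<le> p v) \<and> finite (supp p) \<and> supp p \<in> K \<and> sum p (supp p) = 1"
  using assms unfolding realization_def supp_def by (blast intro: finite_subset)

lemma realization_segment:
  assumes "p \<in> realization K" "q \<in> realization K" "\<sigma> \<in> K" "finite \<sigma>" "supp p \<union> supp q \<subseteq> \<sigma>"
    and "0 \<le> t" "t \<le> 1"
  shows "(\<lambda>v. (1 - t) * p v + t * q v) \<in> realization K"
proof -
  let ?r = "\<lambda>v. (1 - t) * p v + t * q v"
  have sum1: "sum f \<sigma> = 1" if "f \<in> realization K" "supp f \<subseteq> \<sigma>" for f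
    using that assms(4) sum_supp_superset[of \<sigma> f] by (auto simp: realization_def supp_def)
  have supp_r: "supp ?r \<subseteq> \<sigma>" using assms(5) by (force simp: supp_def)
  have "sum ?r (supp ?r) = (1 - t) * sum p \<sigma> + t * sum q \<sigma>"
    using sum_supp_superset[OF assms(4) supp_r] by (simp add: sum.distrib sum_distrib_left)
  also have "\<dots> = 1" using sum1 assms(1,2,5) by simp
  finally have "sum ?r (supp ?r) = 1" .
  moreover have "0 \<le> ?r v" for v
    using assms(1,2,6,7) by (simp add: realization_def)
  ultimately show ?thesis using assms(3,4) supp_r by (auto simp: realization_def supp_def)
qed

lemma homotopic_with_linear_functions:
  fixes f g :: "'a::topological_space \<Rightarrow> 'v \<Rightarrow> real"
  assumes f: "continuous_on S f" and g: "continuous_on S g"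
    and T: "\<And>p t. p \<in> S \<Longrightarrow> 0 \<le> t \<Longrightarrow> t \<le> 1 \<Longrightarrow> (\<lambda>v. (1 - t) * f p v + t * g p v) \<in> T"
  shows "homotopic_with_canon (\<lambda>_. True) S T f g"
  unfolding homotopic_with_def
proof (intro exI conjI allI ballI)
  let ?h = "\<lambda>y v. (1 - fst y) * f (snd y) v + fst y * g (snd y) v"
  have "continuous_on ({0..1} \<times> S) (\<lambda>y. h (snd y) v)"
    if "continuous_on S h" for h :: "'a \<Rightarrow> 'v \<Rightarrow> real" and v
    by (rule continuous_on_compose2[OF continuous_on_product_then_coordinatewise[OF that]
          continuous_on_snd]) auto
  then have "continuous_on ({0..1} \<times> S) ?h"
    using f g by (intro continuous_on_coordinatewise_then_product continuous_intros)
  moreover have "?h ` ({0..1} \<times> S) \<subseteq> T" using T by auto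
  ultimately show "continuous_map (prod_topology (top_of_set {0..1}) (top_of_set S)) (top_of_set T) ?h"
    by (auto simp: prod_topology_subtopology subtopology_subtopology Times_Int_Times)
qed auto

lemma homotopic_in_realization:
  fixes f g :: "'a::topological_space \<Rightarrow> 'v \<Rightarrow> real"
  assumes "continuous_on S f" "continuous_on S g"
    and "\<And>p. p \<in> S \<Longrightarrow> f p \<in> realization K" "\<And>p. p \<in> S \<Longrightarrow> g p \<in> realization K"
    and "\<And>p. p \<in> S \<Longrightarrow> \<exists>\<sigma>\<in>K. finite \<sigma> \<and> supp (f p) \<union> supp (g p) \<subseteq> \<sigma>"
  shows "homotopic_with_canon (\<lambda>_. True) S (realization K) f g"
proof (rule homotopic_with_linear_functions[OF assms(1,2)])
  fix p and t :: real assume "p \<in> S" "0 \<le> t" "t \<le> 1"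
  with assms(3-5) show "(\<lambda>v. (1 - t) * f p v + t * g p v) \<in> realization K"
    by (metis realization_segment)
qed

lemma continuous_on_coordinate [continuous_intros]: "continuous_on S (\<lambda>p. p i)"
  by (rule continuous_on_subset[OF continuous_on_product_coordinates]) auto

lemma Ind_downward_closed: "\<sigma> \<in> Ind V E \<Longrightarrow> \<tau> \<subseteq> \<sigma> \<Longrightarrow> \<tau> \<in> Ind V E"
  by (auto simp: Ind_def)

lemma realization_Ind_iff:
  "p \<in> realization (Ind V E) \<longleftrightarrow>
    (\<forall>v. 0 \<le> p v) \<and> finite (supp p) \<and> supp p \<in> Ind V E \<and> sum p (supp p) = 1"
  by (rule realization_iff) (fact Ind_downward_closed)

lemma mem_suspension_iff:
  "A \<in> suspension K \<longleftrightarrow> {v. SV v \<in> A} \<in> K \<and> \<not> (North \<in> A \<and> South \<in> A)"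
proof
  assume "A \<in> suspension K"
  then obtain \<tau> where "\<tau> \<in> K" "A = SV ` \<tau> \<or> A = insert North (SV ` \<tau>) \<or> A = insert South (SV ` \<tau>)"
    by (auto simp: suspension_def)
  moreover from this have "{v. SV v \<in> A} = \<tau>" by auto
  ultimately show "{v. SV v \<in> A} \<in> K \<and> \<not> (North \<in> A \<and> South \<in> A)" by auto
next
  assume A: "{v. SV v \<in> A} \<in> K \<and> \<not> (North \<in> A \<and> South \<in> A)"
  let ?\<tau> = "{v. SV v \<in> A}"
  have "A = SV ` ?\<tau> \<union> (A \<inter> {North, South})"
  proof (rule set_eqI)
    show "v \<in> A \<longleftrightarrow> v \<in> SV ` ?\<tau> \<union> (A \<inter> {North, South})" for v by (cases v) auto
  qed
  then have "A = SV ` ?\<tau> \<or> A = insert North (SV ` ?\<tau>) \<or> A = insert South (SV ` ?\<tau>)"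
    using A by (cases "North \<in> A"; cases "South \<in> A") auto
  then show "A \<in> suspension K" using A unfolding suspension_def by blast
qed

lemma suspension_downward_closed:
  assumes "\<And>\<sigma> \<tau>. \<sigma> \<in> K \<Longrightarrow> \<tau> \<subseteq> \<sigma> \<Longrightarrow> \<tau> \<in> K"
  shows "\<sigma> \<in> suspension K \<Longrightarrow> \<tau> \<subseteq> \<sigma> \<Longrightarrow> \<tau> \<in> suspension K"
  unfolding mem_suspension_iff by (blast intro: assms)

lemma realization_suspension_Ind_iff:
  "q \<in> realization (suspension (Ind V E)) \<longleftrightarrow>
    (\<forall>v. 0 \<le> q v) \<and> finite (supp q) \<and> supp q \<in> suspension (Ind V E) \<and> sum q (supp q) = 1"
proof (rule realization_iff)
  fix \<sigma> \<tau> assume "\<sigma> \<in> suspension (Ind V E)" "\<tau> \<subseteq> \<sigma>"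
  then show "\<tau> \<in> suspension (Ind V E)"
    by (rule suspension_downward_closed[rotated]) (rule Ind_downward_closed)
qed

lemma realization_suspensionD:
  assumes "q \<in> realization (suspension (Ind V E))"
  shows "q North = 0 \<or> q South = 0"
    and "q (SV w) \<noteq> 0 \<Longrightarrow> w \<in> V"
    and "q (SV v) \<noteq> 0 \<Longrightarrow> q (SV w) \<noteq> 0 \<Longrightarrow> \<not> E v w"
proof -
  have "supp q \<in> suspension (Ind V E)"
    using assms by (simp add: realization_suspension_Ind_iff)
  note face = this[unfolded mem_suspension_iff Ind_def supp_def mem_Collect_eq]
  show "q North = 0 \<or> q South = 0" using face by blast
  show "q (SV w) \<noteq> 0 \<Longrightarrow> w \<in> V" using face by blast
  show "q (SV v) \<noteq> 0 \<Longrightarrow> q (SV w) \<noteq> 0 \<Longrightarrow> \<not> E v w" using face by blast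
qed

lemma Ind_lozin_iff:
  "A \<in> Ind (lozin_V V x) (lozin_E V E x Y Z) \<longleftrightarrow>
     A \<subseteq> lozin_V V x
     \<and> (\<forall>v w. Old v \<in> A \<longrightarrow> Old w \<in> A \<longrightarrow> \<not> E v w)
     \<and> (\<forall>v\<in>Y. Ny \<in> A \<longrightarrow> Old v \<notin> A) \<and> (\<forall>v\<in>Z. Nz \<in> A \<longrightarrow> Old v \<notin> A)
     \<and> \<not> (Ny \<in> A \<and> Na \<in> A) \<and> \<not> (Na \<in> A \<and> Nb \<in> A) \<and> \<not> (Nb \<in> A \<and> Nz \<in> A)"
  (is "_ \<longleftrightarrow> _ \<and> ?edgeless")
proof -
  have "A \<in> Ind (lozin_V V x) (lozin_E V E x Y Z) \<longleftrightarrow>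
      A \<subseteq> lozin_V V x \<and> (\<forall>u\<in>A. \<forall>w\<in>A. \<not> lozin_arc V E x Y Z u w)"
    by (auto simp: Ind_def lozin_E_def)
  moreover have "(\<forall>u\<in>A. \<forall>w\<in>A. \<not> lozin_arc V E x Y Z u w) \<longleftrightarrow> ?edgeless"
    if "A \<subseteq> lozin_V V x"
  proof -
    have old: "Old v \<in> A \<Longrightarrow> v \<in> V - {x}" for v using that by (auto simp: lozin_V_def)
    show ?thesis
    proof
      assume "\<forall>u\<in>A. \<forall>w\<in>A. \<not> lozin_arc V E x Y Z u w"
      then show ?edgeless by (fastforce dest: old)
    next
      assume ?edgeless
      show "\<forall>u\<in>A. \<forall>w\<in>A. \<not> lozin_arc V E x Y Z u w"
      proof (intro ballI)
        fix u w assume "u \<in> A" "w \<in> A"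
        with \<open>?edgeless\<close> show "\<not> lozin_arc V E x Y Z u w" by (cases u; cases w) auto
      qed
    qed
  qed
  ultimately show ?thesis by blast
qed

lemma realization_lozinD:
  assumes "p \<in> realization (Ind (lozin_V V x) (lozin_E V E x Y Z))"
  shows "p Ny = 0 \<or> p Na = 0" "p Na = 0 \<or> p Nb = 0" "p Nb = 0 \<or> p Nz = 0"
    and "p (Old w) \<noteq> 0 \<Longrightarrow> w \<in> V \<and> w \<noteq> x"
    and "p (Old v) \<noteq> 0 \<Longrightarrow> p (Old w) \<noteq> 0 \<Longrightarrow> \<not> E v w"
    and "v \<in> Y \<Longrightarrow> p Ny = 0 \<or> p (Old v) = 0" "v \<in> Z \<Longrightarrow> p Nz = 0 \<or> p (Old v) = 0"
proof -
  have "supp p \<in> Ind (lozin_V V x) (lozin_E V E x Y Z)"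
    using assms by (simp add: realization_Ind_iff)
  note face = this[unfolded Ind_lozin_iff supp_def mem_Collect_eq]
  show "p Ny = 0 \<or> p Na = 0" "p Na = 0 \<or> p Nb = 0" "p Nb = 0 \<or> p Nz = 0"
    using face by blast+
  show "p (Old w) \<noteq> 0 \<Longrightarrow> w \<in> V \<and> w \<noteq> x" using face by (auto simp: lozin_V_def)
  show "p (Old v) \<noteq> 0 \<Longrightarrow> p (Old w) \<noteq> 0 \<Longrightarrow> \<not> E v w" using face by blast
  show "v \<in> Y \<Longrightarrow> p Ny = 0 \<or> p (Old v) = 0" "v \<in> Z \<Longrightarrow> p Nz = 0 \<or> p (Old v) = 0"
    using face by blast+
qed

lemma Ind_lozin_change_middle:
  assumes "A \<in> Ind (lozin_V V x) (lozin_E V E x Y Z)" "B - {Na, Nb} \<subseteq> A"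
    and "\<not> (Ny \<in> B \<and> Na \<in> B)" "\<not> (Na \<in> B \<and> Nb \<in> B)" "\<not> (Nb \<in> B \<and> Nz \<in> B)"
  shows "B \<in> Ind (lozin_V V x) (lozin_E V E x Y Z)"
proof -
  have "A \<subseteq> lozin_V V x" "Na \<in> lozin_V V x" "Nb \<in> lozin_V V x"
    using assms(1) by (simp_all add: Ind_def lozin_V_def)
  then have "B \<subseteq> lozin_V V x" using assms(2) by blast
  moreover have "Old v \<in> B \<Longrightarrow> Old v \<in> A" "Ny \<in> B \<Longrightarrow> Ny \<in> A" "Nz \<in> B \<Longrightarrow> Nz \<in> A" for v
    using assms(2) by blast+
  ultimately show ?thesis using assms(1,3-5) unfolding Ind_lozin_iff by blast
qed

definition to_susp :: "'a \<Rightarrow> ('a lv \<Rightarrow> real) \<Rightarrow> 'a susp \<Rightarrow> real" where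
  "to_susp x p = (\<lambda>v. case v of
      SV w \<Rightarrow> if w = x then 2 * min (p Ny) (p Nz) else p (Old w)
    | North \<Rightarrow> p Nb + p Ny - min (p Ny) (p Nz)
    | South \<Rightarrow> p Na + p Nz - min (p Ny) (p Nz))"

definition from_susp :: "'a \<Rightarrow> ('a susp \<Rightarrow> real) \<Rightarrow> 'a lv \<Rightarrow> real" where
  "from_susp x q = (\<lambda>v. case v of
      Old w \<Rightarrow> if w = x then 0 else q (SV w)
    | Ny \<Rightarrow> q (SV x) / 2 + 2 * min (q North) (q (SV x) / 2) - min (q South) (q (SV x) / 2)
    | Nz \<Rightarrow> q (SV x) / 2 + 2 * min (q South) (q (SV x) / 2) - min (q North) (q (SV x) / 2)
    | Nb \<Rightarrow> q North - min (q North) (q (SV x) / 2)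
    | Na \<Rightarrow> q South - min (q South) (q (SV x) / 2))"

text \<open>
  \<open>from_susp x (to_susp x p)\<close> and \<open>p\<close> need not lie in a common simplex, but
  \<open>sharpen p\<close> lies in a common simplex with each of them.
\<close>
definition sharpen :: "('a lv \<Rightarrow> real) \<Rightarrow> 'a lv \<Rightarrow> real" where
  "sharpen p = (\<lambda>v. case v of
      Ny \<Rightarrow> p Ny + min (p Nz) (max 0 (p Ny - p Nz)) - min (p Ny) (max 0 (p Nz - p Ny))
    | Nz \<Rightarrow> p Nz - min (p Nz) (max 0 (p Ny - p Nz)) + min (p Ny) (max 0 (p Nz - p Ny))
    | _ \<Rightarrow> p v)"

lemma continuous_on_to_susp: "continuous_on S (to_susp x)"
proof (rule continuous_on_coordinatewise_then_product)
  show "continuous_on S (\<lambda>p. to_susp x p v)" for v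
    by (cases v; cases "v = SV x") (auto simp: to_susp_def intro!: continuous_intros)
qed

lemma continuous_on_from_susp: "continuous_on S (from_susp x)"
proof (rule continuous_on_coordinatewise_then_product)
  show "continuous_on S (\<lambda>q. from_susp x q v)" for v
    by (cases v; cases "v = Old x") (auto simp: from_susp_def intro!: continuous_intros)
qed

lemma continuous_on_sharpen: "continuous_on S sharpen"
proof (rule continuous_on_coordinatewise_then_product)
  show "continuous_on S (\<lambda>p. sharpen p v)" for v
    by (cases v) (auto simp: sharpen_def intro!: continuous_intros)
qed

lemma to_susp_nonneg:
  assumes "\<And>u. 0 \<le> p u"
  shows "0 \<le> to_susp x p v"
proof -
  have "0 \<le> p Ny" "0 \<le> p Nz" "0 \<le> p Na" "0 \<le> p Nb" "0 \<le> p (Old w)" for w using assms by auto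
  then show ?thesis by (cases v) (auto simp: to_susp_def min_def)
qed

lemma to_susp_poles:
  assumes "0 \<le> p Ny" "0 \<le> p Nz" "p Ny = 0 \<or> p Na = 0" "p Na = 0 \<or> p Nb = 0" "p Nb = 0 \<or> p Nz = 0"
  shows "to_susp x p North = 0 \<or> to_susp x p South = 0"
  using assms by (auto simp: to_susp_def min_def)

lemma to_susp_apex:
  assumes "0 \<le> p Ny" "0 \<le> p Nz" "to_susp x p (SV x) \<noteq> 0"
  shows "p Ny \<noteq> 0" "p Nz \<noteq> 0"
  using assms by (auto simp: to_susp_def min_def split: if_splits)

lemma to_susp_mass:
  "to_susp x p (SV x) + to_susp x p North + to_susp x p South = p Ny + p Na + p Nb + p Nz"
  by (simp add: to_susp_def)

lemma from_susp_nonneg: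
  assumes "\<And>u. 0 \<le> q u"
  shows "0 \<le> from_susp x q v"
proof -
  have "0 \<le> q North" "0 \<le> q South" "0 \<le> q (SV w)" for w using assms by auto
  then show ?thesis by (cases v) (auto simp: from_susp_def min_def)
qed

lemma from_susp_path:
  assumes "0 \<le> q North" "0 \<le> q South" "0 \<le> q (SV x)" "q North = 0 \<or> q South = 0"
  shows "from_susp x q Ny = 0 \<or> from_susp x q Na = 0" "from_susp x q Na = 0 \<or> from_susp x q Nb = 0"
    "from_susp x q Nb = 0 \<or> from_susp x q Nz = 0"
  using assms by (auto simp: from_susp_def min_def)

lemma from_susp_ends:
  assumes "0 \<le> q North" "0 \<le> q South" "0 \<le> q (SV x)" "q North = 0 \<or> q South = 0"
  shows "from_susp x q Ny \<noteq> 0 \<Longrightarrow> q (SV x) \<noteq> 0" "from_susp x q Nz \<noteq> 0 \<Longrightarrow> q (SV x) \<noteq> 0"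
  using assms by (auto simp: from_susp_def min_def split: if_splits)

lemma from_susp_mass:
  "from_susp x q Ny + from_susp x q Na + from_susp x q Nb + from_susp x q Nz = q (SV x) + q North + q South"
  by (simp add: from_susp_def)

lemma supp_to_susp_from_susp:
  assumes "0 \<le> q North" "0 \<le> q South" "0 \<le> q (SV x)" "q North = 0 \<or> q South = 0"
  shows "supp (to_susp x (from_susp x q)) \<subseteq> supp q"
proof
  fix v assume "v \<in> supp (to_susp x (from_susp x q))"
  then show "v \<in> supp q"
    using assms by (cases v) (auto simp: supp_def to_susp_def from_susp_def min_def split: if_splits)
qed

lemma sharpen_nonneg:
  assumes "\<And>u. 0 \<le> p u"
  shows "0 \<le> sharpen p v"
proof -
  have "0 \<le> p Ny" "0 \<le> p Nz" "0 \<le> p v" using assms by auto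
  then show ?thesis by (cases v) (auto simp: sharpen_def min_def max_def)
qed

lemma supp_sharpen:
  assumes "0 \<le> p Ny" "0 \<le> p Nz"
  shows "supp (sharpen p) \<subseteq> supp p"
proof
  fix v assume "v \<in> supp (sharpen p)"
  then show "v \<in> supp p"
    using assms by (cases v) (auto simp: supp_def sharpen_def min_def max_def split: if_splits)
qed

lemma sharpen_mass: "sharpen p Ny + sharpen p Nz = p Ny + p Nz"
  by (simp add: sharpen_def)

lemma supp_from_to_susp_sharpen:
  fixes x :: 'a and p :: "'a lv \<Rightarrow> real"
  assumes "0 \<le> p Ny" "0 \<le> p Na" "0 \<le> p Nb" "0 \<le> p Nz"
    and "p Ny = 0 \<or> p Na = 0" "p Na = 0 \<or> p Nb = 0" "p Nb = 0 \<or> p Nz = 0"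
  defines "U \<equiv> supp (from_susp x (to_susp x p)) \<union> supp (sharpen p)"
  shows "U - {Na, Nb} \<subseteq> supp p"
    and "\<not> (Ny \<in> U \<and> Na \<in> U)" "\<not> (Na \<in> U \<and> Nb \<in> U)" "\<not> (Nb \<in> U \<and> Nz \<in> U)"
proof -
  define m where "m = min (p Ny) (p Nz)"
  have r: "from_susp x (to_susp x p) Ny = m + 2 * min (p Nb + p Ny - m) m - min (p Na + p Nz - m) m"
    "from_susp x (to_susp x p) Nz = m + 2 * min (p Na + p Nz - m) m - min (p Nb + p Ny - m) m"
    "from_susp x (to_susp x p) Nb = p Nb + p Ny - m - min (p Nb + p Ny - m) m"
    "from_susp x (to_susp x p) Na = p Na + p Nz - m - min (p Na + p Nz - m) m"
    "from_susp x (to_susp x p) (Old w) = (if w = x then 0 else p (Old w))" for w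
    by (simp_all add: from_susp_def to_susp_def m_def)
  have m: "m = p Ny \<or> m = p Nz" "m \<le> p Ny" "m \<le> p Nz" by (auto simp: m_def)
  show "U - {Na, Nb} \<subseteq> supp p"
  proof
    fix v assume "v \<in> U - {Na, Nb}"
    then show "v \<in> supp p"
      unfolding U_def using assms(1-7) m
      by (cases v) (auto simp: r supp_def sharpen_def min_def max_def split: if_splits)
  qed
  show "\<not> (Ny \<in> U \<and> Na \<in> U)" "\<not> (Na \<in> U \<and> Nb \<in> U)" "\<not> (Nb \<in> U \<and> Nz \<in> U)"
    unfolding U_def using assms(1-7) m
    by (auto simp: r supp_def sharpen_def min_def max_def split: if_splits)
qed

lemma finite_supp_to_susp: "finite (supp p) \<Longrightarrow> finite (supp (to_susp x p))"
proof -
  assume "finite (supp p)"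
  then have "finite (SV ` (Old -` supp p) \<union> {SV x, North, South})"
    by (simp add: finite_vimageI inj_def)
  moreover have "supp (to_susp x p) \<subseteq> SV ` (Old -` supp p) \<union> {SV x, North, South}"
  proof
    fix v assume "v \<in> supp (to_susp x p)"
    then show "v \<in> SV ` (Old -` supp p) \<union> {SV x, North, South}"
      by (cases v) (auto simp: supp_def to_susp_def split: if_splits)
  qed
  ultimately show ?thesis by (rule finite_subset[rotated])
qed

lemma finite_supp_from_susp: "finite (supp q) \<Longrightarrow> finite (supp (from_susp x q))"
proof -
  assume "finite (supp q)"
  then have "finite (Old ` (SV -` supp q) \<union> {Ny, Na, Nb, Nz})"
    by (simp add: finite_vimageI inj_def)
  moreover have "supp (from_susp x q) \<subseteq> Old ` (SV -` supp q) \<union> {Ny, Na, Nb, Nz}"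
  proof
    fix v assume "v \<in> supp (from_susp x q)"
    then show "v \<in> Old ` (SV -` supp q) \<union> {Ny, Na, Nb, Nz}"
      by (cases v) (auto simp: supp_def from_susp_def split: if_splits)
  qed
  ultimately show ?thesis by (rule finite_subset[rotated])
qed

lemma sum_supp_to_susp:
  assumes fin: "finite (supp p)" and "p (Old x) = 0"
  shows "sum (to_susp x p) (supp (to_susp x p)) = sum p (supp p)"
proof -
  let ?f = "to_susp x p"
  have SV_f: "?f (SV w) = (if w = x then 2 * min (p Ny) (p Nz) else p (Old w))" for w
    by (simp add: to_susp_def)
  have "{v. v \<noteq> x \<and> ?f (SV v) \<noteq> 0} = {v. v \<noteq> x \<and> p (Old v) \<noteq> 0}" by (auto simp: SV_f)
  then have "sum ?f (supp ?f)
      = (\<Sum>v | v \<noteq> x \<and> p (Old v) \<noteq> 0. ?f (SV v)) + ?f (SV x) + ?f North + ?f South"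
    using sum_supp_susp[OF finite_supp_to_susp[OF fin], where x=x] by simp
  also have "(\<Sum>v | v \<noteq> x \<and> p (Old v) \<noteq> 0. ?f (SV v)) = (\<Sum>v | v \<noteq> x \<and> p (Old v) \<noteq> 0. p (Old v))"
    by (rule sum.cong) (auto simp: SV_f)
  also have "\<dots> + ?f (SV x) + ?f North + ?f South = sum p (supp p)"
    using sum_supp_lv[OF fin, of x] to_susp_mass[of x p] assms(2) by linarith
  finally show ?thesis .
qed

lemma sum_supp_from_susp:
  assumes fin: "finite (supp q)"
  shows "sum (from_susp x q) (supp (from_susp x q)) = sum q (supp q)"
proof -
  let ?g = "from_susp x q"
  have old: "?g (Old w) \<noteq> 0 \<longleftrightarrow> w \<noteq> x \<and> q (SV w) \<noteq> 0" for w
    by (simp add: from_susp_def)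
  have "{v. v \<noteq> x \<and> ?g (Old v) \<noteq> 0} = {v. v \<noteq> x \<and> q (SV v) \<noteq> 0}" by (auto simp: old)
  then have "sum ?g (supp ?g)
      = (\<Sum>v | v \<noteq> x \<and> q (SV v) \<noteq> 0. ?g (Old v)) + ?g (Old x) + ?g Ny + ?g Na + ?g Nb + ?g Nz"
    using sum_supp_lv[OF finite_supp_from_susp[OF fin], where x=x] by simp
  also have "(\<Sum>v | v \<noteq> x \<and> q (SV v) \<noteq> 0. ?g (Old v)) = (\<Sum>v | v \<noteq> x \<and> q (SV v) \<noteq> 0. q (SV v))"
    by (rule sum.cong) (auto simp: from_susp_def)
  also have "\<dots> + ?g (Old x) + ?g Ny + ?g Na + ?g Nb + ?g Nz = sum q (supp q)"
    using sum_supp_susp[OF fin, of x] from_susp_mass[of x q] old[of x] by fastforce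
  finally show ?thesis .
qed

lemma sharpen_in_realization:
  assumes p: "p \<in> realization (Ind (lozin_V V x) (lozin_E V E x Y Z))"
  shows "sharpen p \<in> realization (Ind (lozin_V V x) (lozin_E V E x Y Z))"
proof -
  have nonneg: "\<And>u. 0 \<le> p u" and fin: "finite (supp p)" and mass: "sum p (supp p) = 1"
    and face: "supp p \<in> Ind (lozin_V V x) (lozin_E V E x Y Z)"
    using p by (auto simp: realization_Ind_iff)
  have supp_h: "supp (sharpen p) \<subseteq> supp p" by (rule supp_sharpen[OF nonneg nonneg])
  then have fin_h: "finite (supp (sharpen p))" using fin by (rule finite_subset)
  have "sum (sharpen p) (supp (sharpen p)) = sum p (supp p)"
    using sum_supp_lv[OF fin_h, of x] sum_supp_lv[OF fin, of x] sharpen_mass[of p]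
    by (simp add: sharpen_def)
  then show ?thesis
    using fin_h mass Ind_downward_closed[OF face supp_h] sharpen_nonneg[of p, OF nonneg]
    by (simp add: realization_Ind_iff)
qed

lemma sharpen_homotopic_id:
  "homotopic_with_canon (\<lambda>_. True) (realization (Ind (lozin_V V x) (lozin_E V E x Y Z)))
     (realization (Ind (lozin_V V x) (lozin_E V E x Y Z))) sharpen id"
proof (rule homotopic_in_realization[OF continuous_on_sharpen continuous_on_id'])
  fix p assume p: "p \<in> realization (Ind (lozin_V V x) (lozin_E V E x Y Z))"
  then show "sharpen p \<in> realization (Ind (lozin_V V x) (lozin_E V E x Y Z))"
    by (rule sharpen_in_realization)
  from p have "supp p \<in> Ind (lozin_V V x) (lozin_E V E x Y Z)" "finite (supp p)" "\<And>u. 0 \<le> p u"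
    by (auto simp: realization_Ind_iff)
  with supp_sharpen[of p] show "\<exists>\<sigma>\<in>Ind (lozin_V V x) (lozin_E V E x Y Z). finite \<sigma> \<and>
      supp (sharpen p) \<union> supp (id p) \<subseteq> \<sigma>"
    by auto
qed simp

context
  fixes V :: "'a set" and E :: "'a \<Rightarrow> 'a \<Rightarrow> bool" and x :: 'a and Y Z :: "'a set"
  assumes graph: "simple_graph V E" and x_in_V: "x \<in> V" and nbhd_x: "Y \<union> Z = nbhd V E x"
begin

lemma supp_to_susp_in_suspension:
  assumes p: "p \<in> realization (Ind (lozin_V V x) (lozin_E V E x Y Z))"
  shows "supp (to_susp x p) \<in> suspension (Ind V E)"
proof -
  let ?f = "to_susp x p"
  have nonneg: "\<And>u. 0 \<le> p u" using p by (simp add: realization_Ind_iff)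
  note pD = realization_lozinD[OF p]
  have SV_f: "?f (SV w) = (if w = x then 2 * min (p Ny) (p Nz) else p (Old w))" for w
    by (simp add: to_susp_def)
  have x_free: "\<not> E x w" if "?f (SV x) \<noteq> 0" "p (Old w) \<noteq> 0" for w
  proof
    assume "E x w"
    with pD(4)[OF that(2)] nbhd_x have "w \<in> Y \<union> Z" by (auto simp: nbhd_def)
    moreover have "p Ny \<noteq> 0" "p Nz \<noteq> 0" by (fact to_susp_apex[OF nonneg nonneg that(1)])+
    ultimately show False using pD(6,7) that(2) by blast
  qed
  have E_sym: "E u w \<Longrightarrow> E w u" and E_irrefl: "\<not> E u u" for u w
    using graph by (auto simp: simple_graph_def)
  have "{w. SV w \<in> supp ?f} \<in> Ind V E"
    unfolding Ind_def
  proof (intro CollectI conjI ballI)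
    show "{w. SV w \<in> supp ?f} \<subseteq> V"
      using x_in_V pD(4) by (auto simp: supp_def SV_f split: if_splits)
    fix u w assume "u \<in> {w. SV w \<in> supp ?f}" "w \<in> {w. SV w \<in> supp ?f}"
    then have u: "?f (SV u) \<noteq> 0" and w: "?f (SV w) \<noteq> 0" by (auto simp: supp_def)
    show "\<not> E u w"
    proof (cases "u = x"; cases "w = x")
      assume "u \<noteq> x" "w \<noteq> x"
      then show ?thesis using u w pD(5) by (simp add: SV_f)
    next
      assume "u = x" "w \<noteq> x"
      then show ?thesis using u w x_free by (simp add: SV_f)
    next
      assume "u \<noteq> x" "w = x"
      then show ?thesis using u w x_free E_sym by (metis SV_f)
    qed (simp add: E_irrefl)
  qed
  moreover have "\<not> (North \<in> supp ?f \<and> South \<in> supp ?f)"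
    using to_susp_poles[of p x] nonneg pD(1-3) by (auto simp: supp_def)
  ultimately show ?thesis by (simp add: mem_suspension_iff)
qed

lemma supp_from_susp_in_Ind_lozin:
  assumes q: "q \<in> realization (suspension (Ind V E))"
  shows "supp (from_susp x q) \<in> Ind (lozin_V V x) (lozin_E V E x Y Z)"
proof -
  let ?g = "from_susp x q"
  have nonneg: "\<And>u. 0 \<le> q u" using q by (simp add: realization_suspension_Ind_iff)
  note qD = realization_suspensionD[OF q]
  have old: "?g (Old w) \<noteq> 0 \<longleftrightarrow> w \<noteq> x \<and> q (SV w) \<noteq> 0" for w
    by (simp add: from_susp_def)
  have "supp ?g \<subseteq> lozin_V V x"
  proof
    fix v assume "v \<in> supp ?g"
    then show "v \<in> lozin_V V x"
      using qD(2) by (cases v) (auto simp: supp_def lozin_V_def old)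
  qed
  moreover have "\<not> E v w" if "?g (Old v) \<noteq> 0" "?g (Old w) \<noteq> 0" for v w
    using qD(3) that by (simp add: old)
  moreover have "?g Ny = 0 \<and> ?g Nz = 0" if "v \<in> Y \<union> Z" "?g (Old v) \<noteq> 0" for v
  proof -
    have "E x v" using nbhd_x that(1) by (auto simp: nbhd_def)
    then show ?thesis
      using qD(3)[of x v] from_susp_ends[OF nonneg nonneg nonneg qD(1)] that(2) by (auto simp: old)
  qed
  ultimately show ?thesis
    unfolding Ind_lozin_iff using from_susp_path[OF nonneg nonneg nonneg qD(1)]
    by (auto simp: supp_def)
qed

lemma to_susp_in_realization:
  assumes p: "p \<in> realization (Ind (lozin_V V x) (lozin_E V E x Y Z))"
  shows "to_susp x p \<in> realization (suspension (Ind V E))"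
proof -
  have nonneg: "\<And>u. 0 \<le> p u" and fin: "finite (supp p)" and mass: "sum p (supp p) = 1"
    using p by (auto simp: realization_Ind_iff)
  have "p (Old x) = 0" using realization_lozinD(4)[OF p, of x] by blast
  then show ?thesis
    using supp_to_susp_in_suspension[OF p] finite_supp_to_susp[OF fin] sum_supp_to_susp[OF fin]
      mass to_susp_nonneg[of p, OF nonneg]
    by (simp add: realization_suspension_Ind_iff)
qed

lemma from_susp_in_realization:
  assumes q: "q \<in> realization (suspension (Ind V E))"
  shows "from_susp x q \<in> realization (Ind (lozin_V V x) (lozin_E V E x Y Z))"
proof -
  have nonneg: "\<And>u. 0 \<le> q u" and fin: "finite (supp q)" and mass: "sum q (supp q) = 1"
    using q by (auto simp: realization_suspension_Ind_iff)
  then show ?thesis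
    using supp_from_susp_in_Ind_lozin[OF q] finite_supp_from_susp[OF fin] sum_supp_from_susp[OF fin]
      from_susp_nonneg[of q, OF nonneg]
    by (simp add: realization_Ind_iff)
qed

lemma from_to_susp_homotopic_sharpen:
  "homotopic_with_canon (\<lambda>_. True) (realization (Ind (lozin_V V x) (lozin_E V E x Y Z)))
     (realization (Ind (lozin_V V x) (lozin_E V E x Y Z))) (from_susp x \<circ> to_susp x) sharpen"
proof (rule homotopic_in_realization)
  show "continuous_on S (from_susp x \<circ> to_susp x)" for S
    by (rule continuous_on_compose[OF continuous_on_to_susp continuous_on_from_susp])
  fix p assume p: "p \<in> realization (Ind (lozin_V V x) (lozin_E V E x Y Z))"
  show gf: "(from_susp x \<circ> to_susp x) p \<in> realization (Ind (lozin_V V x) (lozin_E V E x Y Z))"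
    using from_susp_in_realization[OF to_susp_in_realization[OF p]] by simp
  show h: "sharpen p \<in> realization (Ind (lozin_V V x) (lozin_E V E x Y Z))"
    by (rule sharpen_in_realization[OF p])
  have nonneg: "\<And>u. 0 \<le> p u" and face: "supp p \<in> Ind (lozin_V V x) (lozin_E V E x Y Z)"
    using p by (auto simp: realization_Ind_iff)
  note U = supp_from_to_susp_sharpen[OF nonneg nonneg nonneg nonneg realization_lozinD(1-3)[OF p]]
  have "supp (from_susp x (to_susp x p)) \<union> supp (sharpen p) \<in> Ind (lozin_V V x) (lozin_E V E x Y Z)"
    by (rule Ind_lozin_change_middle[OF face U])
  moreover have "finite (supp (from_susp x (to_susp x p)) \<union> supp (sharpen p))"
    using gf h by (simp add: realization_Ind_iff)
  ultimately show "\<exists>\<sigma>\<in>Ind (lozin_V V x) (lozin_E V E x Y Z). finite \<sigma> \<and>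
      supp ((from_susp x \<circ> to_susp x) p) \<union> supp (sharpen p) \<subseteq> \<sigma>"
    by auto
qed (rule continuous_on_sharpen)

lemma to_from_susp_homotopic_id:
  "homotopic_with_canon (\<lambda>_. True) (realization (suspension (Ind V E)))
     (realization (suspension (Ind V E))) (to_susp x \<circ> from_susp x) id"
proof (rule homotopic_in_realization[OF _ continuous_on_id'])
  show "continuous_on S (to_susp x \<circ> from_susp x)" for S
    by (rule continuous_on_compose[OF continuous_on_from_susp continuous_on_to_susp])
  fix q assume q: "q \<in> realization (suspension (Ind V E))"
  then show "(to_susp x \<circ> from_susp x) q \<in> realization (suspension (Ind V E))"
    using to_susp_in_realization[OF from_susp_in_realization] by simp
  from q have "supp q \<in> suspension (Ind V E)" "finite (supp q)" "\<And>u. 0 \<le> q u"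
    by (auto simp: realization_suspension_Ind_iff)
  with supp_to_susp_from_susp[of q x] realization_suspensionD(1)[OF q]
  show "\<exists>\<sigma>\<in>suspension (Ind V E). finite \<sigma> \<and> supp ((to_susp x \<circ> from_susp x) q) \<union> supp (id q) \<subseteq> \<sigma>"
    by auto
qed simp

end

theorem mainTheorem14:
  fixes V :: "'a set" and E :: "'a \<Rightarrow> 'a \<Rightarrow> bool" and x :: 'a and Y Z :: "'a set"
  assumes "simple_graph V E"
    and "x \<in> V"
    and "Y \<union> Z = nbhd V E x"
    and "Y \<inter> Z = {}"
  shows "(top_of_set (realization (Ind (lozin_V V x) (lozin_E V E x Y Z))))
           homotopy_equivalent_space (top_of_set (realization (suspension (Ind V E))))"
  unfolding homotopy_equivalent_space_def
proof (intro exI conjI)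
  let ?L = "realization (Ind (lozin_V V x) (lozin_E V E x Y Z))"
  let ?S = "realization (suspension (Ind V E))"
  show "continuous_map (top_of_set ?L) (top_of_set ?S) (to_susp x)"
    using to_susp_in_realization[OF assms(1-3)] by (auto simp: continuous_on_to_susp)
  show "continuous_map (top_of_set ?S) (top_of_set ?L) (from_susp x)"
    using from_susp_in_realization[OF assms(1-3)] by (auto simp: continuous_on_from_susp)
  show "homotopic_with (\<lambda>_. True) (top_of_set ?L) (top_of_set ?L) (from_susp x \<circ> to_susp x) id"
    using from_to_susp_homotopic_sharpen[OF assms(1-3)] sharpen_homotopic_id
    by (rule homotopic_with_trans)
  show "homotopic_with (\<lambda>_. True) (top_of_set ?S) (top_of_set ?S) (to_susp x \<circ> from_susp x) id"
    using to_from_susp_homotopic_id[OF assms(1-3)] .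
qed

end
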